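(* For all teams $T,S$ the following are equivalent: (1) $T\equiv_{\mathrm{st}}S$; (2) for all teams $T_1,T_2$ with $T=T_1\cup T_2$ there are teams $S_1,S_2$ with $S=S_1\cup S_2$, $T_1\equiv_{\mathrm{st}}S_1$ and $T_2\equiv_{\mathrm{st}}S_2$.
   Context: A trace is an infinite sequence $t=t(0)t(1)\cdots$ of subsets of a set $\mathrm{AP}$ of propositions; a team is a set of traces. A stuttering function of a trace $t$ is a strictly increasing function $f:\mathbb N\to\mathbb N$ with $f(0)=0$ such that $t(f(k))=t(f(k)+1)=\cdots=t(f(k+1)-1)$ for all $k\ge0$. A stuttering function of a team $T$ is a function that is a stuttering function of every $t\in T$. For $f:\mathbb N\to\mathbb N$, $t[f]:=t(f(0))t(f(1))t(f(2))\cdots$ and $T[f]:=\{t[f]:t\in T\}$. Teams $T,T'$ are stutter-equivalent ($T\equiv_{\mathrm{st}}T'$) if there are a stuttering function $f$ of $T$ and a stuttering function $f'$ of $T'$ with $T[f]=T'[f']$. *)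

theory Defs
  imports Main
begin

type_synonym 'a trace = "nat \<Rightarrow> 'a set"
type_synonym 'a team = "'a trace set"

definition stuttering_fun :: "'a trace \<Rightarrow> (nat \<Rightarrow> nat) \<Rightarrow> bool" where
  "stuttering_fun t f \<longleftrightarrow> strict_mono f \<and> f 0 = 0 \<and>
     (\<forall>k. \<forall>i. f k \<le> i \<and> i < f (Suc k) \<longrightarrow> t i = t (f k))"

definition team_stuttering_fun :: "'a team \<Rightarrow> (nat \<Rightarrow> nat) \<Rightarrow> bool" where
  "team_stuttering_fun T f \<longleftrightarrow> strict_mono f \<and> f 0 = 0 \<and> (\<forall>t\<in>T. stuttering_fun t f)"

definition trace_comp :: "'a trace \<Rightarrow> (nat \<Rightarrow> nat) \<Rightarrow> 'a trace" where
  "trace_comp t f = (\<lambda>k. t (f k))"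

definition team_comp :: "'a team \<Rightarrow> (nat \<Rightarrow> nat) \<Rightarrow> 'a team" where
  "team_comp T f = {trace_comp t f | t. t \<in> T}"

definition stutter_equiv :: "'a team \<Rightarrow> 'a team \<Rightarrow> bool" where
  "stutter_equiv T T' \<longleftrightarrow> (\<exists>f f'. team_stuttering_fun T f \<and> team_stuttering_fun T' f' \<and>
      team_comp T f = team_comp T' f')"

end

theory Submission
  imports Defs
begin

text \<open>If \<open>T[f] = S[g]\<close>, then any split \<open>T = T\<^sub>1 \<union> T\<^sub>2\<close> is matched by splitting \<open>S\<close> into the
  traces whose \<open>g\<close>-subsequence lies in \<open>T\<^sub>1[f]\<close> resp. \<open>T\<^sub>2[f]\<close>, with the same stuttering functions.
  Conversely, the split \<open>T = T \<union> {}\<close> forces a decomposition \<open>S = S\<^sub>1 \<union> {}\<close> with \<open>T \<equiv>\<^sub>s\<^sub>t S\<^sub>1\<close>,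
  since only the empty team is stutter-equivalent to the empty team.\<close>

lemma team_stuttering_fun_subset:
  "team_stuttering_fun T f \<Longrightarrow> T' \<subseteq> T \<Longrightarrow> team_stuttering_fun T' f"
  unfolding team_stuttering_fun_def by blast

lemma team_comp_Un: "team_comp (A \<union> B) f = team_comp A f \<union> team_comp B f"
  unfolding team_comp_def by auto

lemma team_comp_mono: "A \<subseteq> B \<Longrightarrow> team_comp A f \<subseteq> team_comp B f"
  unfolding team_comp_def by blast

lemma trace_comp_in_team_comp: "t \<in> T \<Longrightarrow> trace_comp t f \<in> team_comp T f"
  unfolding team_comp_def by blast

definition team_comp_preimage :: "'a team \<Rightarrow> (nat \<Rightarrow> nat) \<Rightarrow> 'a team \<Rightarrow> 'a team" where
  "team_comp_preimage S g U = {s \<in> S. trace_comp s g \<in> U}"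

lemma team_comp_preimage_Un:
  "team_comp_preimage S g (U \<union> V) = team_comp_preimage S g U \<union> team_comp_preimage S g V"
  unfolding team_comp_preimage_def by auto

lemma team_comp_preimage_whole: "team_comp_preimage S g (team_comp S g) = S"
  unfolding team_comp_preimage_def by (auto intro: trace_comp_in_team_comp)

lemma team_comp_preimage_image:
  assumes "U \<subseteq> team_comp S g"
  shows "team_comp (team_comp_preimage S g U) g = U"
  using assms unfolding team_comp_preimage_def team_comp_def by blast

lemma stutter_equiv_restrict:
  assumes f: "team_stuttering_fun T f" and g: "team_stuttering_fun S g"
    and eq: "team_comp T f = team_comp S g" and sub: "T' \<subseteq> T"
  shows "stutter_equiv T' (team_comp_preimage S g (team_comp T' f))"
  unfolding stutter_equiv_def
proof (intro exI conjI)
  show "team_stuttering_fun T' f"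
    using f sub by (rule team_stuttering_fun_subset)
  show "team_stuttering_fun (team_comp_preimage S g (team_comp T' f)) g"
    using g by (rule team_stuttering_fun_subset) (auto simp: team_comp_preimage_def)
  have "team_comp T' f \<subseteq> team_comp S g"
    using team_comp_mono[OF sub, of f] eq by simp
  then show "team_comp T' f = team_comp (team_comp_preimage S g (team_comp T' f)) g"
    by (simp add: team_comp_preimage_image)
qed

lemma stutter_equiv_split:
  assumes "stutter_equiv (T1 \<union> T2) S"
  shows "\<exists>S1 S2. S = S1 \<union> S2 \<and> stutter_equiv T1 S1 \<and> stutter_equiv T2 S2"
proof -
  obtain f g where f: "team_stuttering_fun (T1 \<union> T2) f" and g: "team_stuttering_fun S g"
    and eq: "team_comp (T1 \<union> T2) f = team_comp S g"
    using assms unfolding stutter_equiv_def by blast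
  let ?S1 = "team_comp_preimage S g (team_comp T1 f)"
  let ?S2 = "team_comp_preimage S g (team_comp T2 f)"
  have "S = ?S1 \<union> ?S2"
    using eq by (simp add: team_comp_Un team_comp_preimage_Un [symmetric] team_comp_preimage_whole)
  moreover have "stutter_equiv T1 ?S1" "stutter_equiv T2 ?S2"
    using stutter_equiv_restrict[OF f g eq] by auto
  ultimately show ?thesis by blast
qed

lemma stutter_equiv_empty_iff: "stutter_equiv {} S \<longleftrightarrow> S = {}"
  unfolding stutter_equiv_def team_comp_def team_stuttering_fun_def
  by (auto intro!: exI[of _ id] simp: strict_mono_def)

theorem mainTheorem7:
  fixes T S :: "'a team"
  shows "stutter_equiv T S \<longleftrightarrow>
    (\<forall>T1 T2. T = T1 \<union> T2 \<longrightarrow>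
       (\<exists>S1 S2. S = S1 \<union> S2 \<and> stutter_equiv T1 S1 \<and> stutter_equiv T2 S2))"
proof
  assume "stutter_equiv T S"
  then show "\<forall>T1 T2. T = T1 \<union> T2 \<longrightarrow>
      (\<exists>S1 S2. S = S1 \<union> S2 \<and> stutter_equiv T1 S1 \<and> stutter_equiv T2 S2)"
    using stutter_equiv_split by blast
next
  assume "\<forall>T1 T2. T = T1 \<union> T2 \<longrightarrow>
      (\<exists>S1 S2. S = S1 \<union> S2 \<and> stutter_equiv T1 S1 \<and> stutter_equiv T2 S2)"
  then obtain S1 S2 where "S = S1 \<union> S2" "stutter_equiv T S1" "stutter_equiv {} S2"
    by (metis sup_bot.right_neutral)
  then show "stutter_equiv T S"
    by (simp add: stutter_equiv_empty_iff)
qed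

end
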